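(* Let $I:[0,1]^2\to[0,1]$ be a fuzzy implication function, let $U_1,U_2$ be disjunctive uninorms with neutral elements $e_1,e_2\in\,]0,1[$ respectively, and let $N_1,N_2$ be fuzzy negations such that $$I(x,y)=U_1(N_1(x),y)=U_2(N_2(x),y)\quad\text{for all }x,y\in[0,1].$$ Then: (i) if $U_1=U_2$, then $N_1=N_2$; (ii) if $N_1,N_2$ are continuous and $N_1=N_2$, then $U_1=U_2$; (iii) if $e_1=e_2$ and $N_1,N_2$ are continuous, then $U_1=U_2$ and $N_1=N_2$.
   Context: A fuzzy negation is a non-increasing map $N:[0,1]\to[0,1]$ with $N(0)=1$, $N(1)=0$. A uninorm is a map $U:[0,1]^2\to[0,1]$ that is commutative, associative, non-decreasing in each variable, and has a neutral element $e\in[0,1]$ ($U(x,e)=x$ for all $x$). A uninorm is disjunctive if $U(1,0)=1$. A fuzzy implication function is a map $I:[0,1]^2\to[0,1]$ that is non-increasing in the first variable, non-decreasing in the second, and satisfies $I(0,0)=I(1,1)=1$, $I(1,0)=0$. *)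

theory Defs
  imports Complex_Main
begin

text \<open>All operators are real functions considered only on the unit interval [0,1];
values outside [0,1] are irrelevant, and equalities of operators are equalities on [0,1].\<close>

definition fuzzy_negation :: "(real \<Rightarrow> real) \<Rightarrow> bool" where
  "fuzzy_negation N \<longleftrightarrow>
     (\<forall>x\<in>{0..1}. N x \<in> {0..1}) \<and>
     (\<forall>x\<in>{0..1}. \<forall>y\<in>{0..1}. x \<le> y \<longrightarrow> N y \<le> N x) \<and>
     N 0 = 1 \<and> N 1 = 0"

definition uninorm :: "(real \<Rightarrow> real \<Rightarrow> real) \<Rightarrow> real \<Rightarrow> bool" where
  "uninorm U e \<longleftrightarrow> e \<in> {0..1} \<and>
     (\<forall>x\<in>{0..1}. \<forall>y\<in>{0..1}. U x y \<in> {0..1}) \<and>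
     (\<forall>x\<in>{0..1}. \<forall>y\<in>{0..1}. U x y = U y x) \<and>
     (\<forall>x\<in>{0..1}. \<forall>y\<in>{0..1}. \<forall>z\<in>{0..1}. U x (U y z) = U (U x y) z) \<and>
     (\<forall>x\<in>{0..1}. \<forall>y\<in>{0..1}. \<forall>z\<in>{0..1}. x \<le> y \<longrightarrow> U x z \<le> U y z) \<and>
     (\<forall>x\<in>{0..1}. U x e = x)"

definition disjunctive_uninorm :: "(real \<Rightarrow> real \<Rightarrow> real) \<Rightarrow> real \<Rightarrow> bool" where
  "disjunctive_uninorm U e \<longleftrightarrow> uninorm U e \<and> U 1 0 = 1"

definition fuzzy_implication :: "(real \<Rightarrow> real \<Rightarrow> real) \<Rightarrow> bool" where
  "fuzzy_implication I \<longleftrightarrow>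
     (\<forall>x\<in>{0..1}. \<forall>y\<in>{0..1}. I x y \<in> {0..1}) \<and>
     (\<forall>x1\<in>{0..1}. \<forall>x2\<in>{0..1}. \<forall>y\<in>{0..1}. x1 \<le> x2 \<longrightarrow> I x2 y \<le> I x1 y) \<and>
     (\<forall>x\<in>{0..1}. \<forall>y1\<in>{0..1}. \<forall>y2\<in>{0..1}. y1 \<le> y2 \<longrightarrow> I x y1 \<le> I x y2) \<and>
     I 0 0 = 1 \<and> I 1 1 = 1 \<and> I 1 0 = 0"

end

theory Submission
  imports Defs
begin

text \<open>Evaluating \<open>I(x,y) = U(N(x),y)\<close> at the neutral element \<open>y = e\<close> gives \<open>N(x) = I(x,e)\<close>,
  so the negation is recovered from \<open>I\<close> and \<open>e\<close>; and uninorms agreeing on \<open>[0,1]\<^sup>2\<close> share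
  their neutral element. This yields (i) and the negation part of (iii). A continuous negation
  maps \<open>[0,1]\<close> onto \<open>[0,1]\<close> by the intermediate value theorem, so \<open>U(N(x),y) = I(x,y)\<close>
  determines \<open>U\<close> on the whole square, which gives (ii) and the rest of (iii).\<close>

lemma fuzzy_negation_range:
  assumes "fuzzy_negation N" "x \<in> {0..1}"
  shows "N x \<in> {0..1}"
  using assms unfolding fuzzy_negation_def by blast

lemma fuzzy_negation_continuous_image:
  assumes N: "fuzzy_negation N" and cont: "continuous_on {0..1} N"
  shows "N ` {0..1} = {0..1}"
proof
  show "N ` {0..1} \<subseteq> {0..1}"
    using fuzzy_negation_range[OF N] by blast
  show "{0..1} \<subseteq> N ` {0..1}"
  proof
    fix a :: real assume a: "a \<in> {0..1}"
    then have "N 1 \<le> a" "a \<le> N 0"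
      using N unfolding fuzzy_negation_def by auto
    from IVT2'[OF this _ cont] show "a \<in> N ` {0..1}" by force
  qed
qed

lemma uninorm_neutral:
  assumes "uninorm U e" "x \<in> {0..1}"
  shows "U x e = x"
  using assms unfolding uninorm_def by blast

lemma uninorm_neutral_unique:
  assumes U1: "uninorm U1 e1" and U2: "uninorm U2 e2"
    and eq: "\<forall>x\<in>{0..1}. \<forall>y\<in>{0..1}. U1 x y = U2 x y"
  shows "e1 = e2"
proof -
  have e: "e1 \<in> {0..1}" "e2 \<in> {0..1}"
    using U1 U2 unfolding uninorm_def by blast+
  have "e2 = U1 e2 e1" using uninorm_neutral[OF U1 e(2)] by simp
  also have "\<dots> = U1 e1 e2" using U1 e unfolding uninorm_def by blast
  also have "\<dots> = U2 e1 e2" using eq e by blast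
  also have "\<dots> = e1" using uninorm_neutral[OF U2 e(1)] .
  finally show ?thesis by simp
qed

lemma negation_eq_implication_at_neutral:
  assumes U: "uninorm U e" and N: "fuzzy_negation N"
    and rep: "\<forall>x\<in>{0..1}. \<forall>y\<in>{0..1}. I x y = U (N x) y"
    and x: "x \<in> {0..1}"
  shows "N x = I x e"
proof -
  have "e \<in> {0..1}" using U unfolding uninorm_def by blast
  then have "I x e = U (N x) e" using rep x by blast
  also have "\<dots> = N x" using uninorm_neutral[OF U fuzzy_negation_range[OF N x]] .
  finally show ?thesis by simp
qed

theorem proposition1:
  fixes I U1 U2 :: "real \<Rightarrow> real \<Rightarrow> real" and N1 N2 :: "real \<Rightarrow> real" and e1 e2 :: real
  assumes I: "fuzzy_implication I"
    and U1: "disjunctive_uninorm U1 e1" and e1: "0 < e1" "e1 < 1"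
    and U2: "disjunctive_uninorm U2 e2" and e2: "0 < e2" "e2 < 1"
    and N1: "fuzzy_negation N1" and N2: "fuzzy_negation N2"
    and rep: "\<forall>x\<in>{0..1}. \<forall>y\<in>{0..1}. I x y = U1 (N1 x) y \<and> I x y = U2 (N2 x) y"
  shows "((\<forall>x\<in>{0..1}. \<forall>y\<in>{0..1}. U1 x y = U2 x y) \<longrightarrow> (\<forall>x\<in>{0..1}. N1 x = N2 x))
       \<and> (continuous_on {0..1} N1 \<and> continuous_on {0..1} N2 \<and> (\<forall>x\<in>{0..1}. N1 x = N2 x)
            \<longrightarrow> (\<forall>x\<in>{0..1}. \<forall>y\<in>{0..1}. U1 x y = U2 x y))
       \<and> (e1 = e2 \<and> continuous_on {0..1} N1 \<and> continuous_on {0..1} N2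
            \<longrightarrow> (\<forall>x\<in>{0..1}. \<forall>y\<in>{0..1}. U1 x y = U2 x y) \<and> (\<forall>x\<in>{0..1}. N1 x = N2 x))"
proof -
  have U1': "uninorm U1 e1" and U2': "uninorm U2 e2"
    using U1 U2 unfolding disjunctive_uninorm_def by blast+
  have rep1: "\<forall>x\<in>{0..1}. \<forall>y\<in>{0..1}. I x y = U1 (N1 x) y"
    and rep2: "\<forall>x\<in>{0..1}. \<forall>y\<in>{0..1}. I x y = U2 (N2 x) y"
    using rep by blast+
  have negations_eq: "\<forall>x\<in>{0..1}. N1 x = N2 x" if "e1 = e2"
    using negation_eq_implication_at_neutral[OF U1' N1 rep1]
      negation_eq_implication_at_neutral[OF U2' N2 rep2] that by simp
  have uninorms_eq: "\<forall>a\<in>{0..1}. \<forall>y\<in>{0..1}. U1 a y = U2 a y"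
    if "continuous_on {0..1} N1" "\<forall>x\<in>{0..1}. N1 x = N2 x"
  proof (intro ballI)
    fix a y :: real assume "a \<in> {0..1}" "y \<in> {0..1}"
    moreover have "N1 ` {0..1} = {0..1}"
      using fuzzy_negation_continuous_image[OF N1 that(1)] .
    ultimately obtain x where "x \<in> {0..1}" "a = N1 x" by blast
    then show "U1 a y = U2 a y" using rep1 rep2 that(2) \<open>y \<in> {0..1}\<close> by metis
  qed
  show ?thesis
    using negations_eq uninorms_eq uninorm_neutral_unique[OF U1' U2'] by blast
qed

end
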